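(* Let $q$ be a square with $\operatorname{char}(\mathbb{F}_q)\neq 2$, and let $X=\{F=0\}\subset\mathbb{P}^n$ be a reduced Frobenius nonclassical hypersurface over $\mathbb{F}_q$ of degree $\sqrt q+1$ such that $F_{1,0}=cF^{\sqrt q}$ for some nonzero constant $c$. Then $X$ is Hermitian.
   Context: $F\in\mathbb{F}_q[x_0,\dots,x_n]$ is homogeneous, $F_{1,0}:=\sum_{i=0}^n x_i^q\frac{\partial F}{\partial x_i}$, and $X$ is Frobenius nonclassical if $F$ divides $F_{1,0}$; reduced means $F$ is squarefree. A Hermitian variety is a hypersurface defined by $\overline{\mathbf{x}}\cdot H\cdot\mathbf{x}^t$ where $\mathbf{x}=(x_0,\dots,x_n)$, $\overline{a}=a^{\sqrt q}$ applied entrywise, and $H$ is a nonzero matrix over $\mathbb{F}_q$ with $\overline{H}^t=H$ (equivalently, projectively equivalent over $\mathbb{F}_q$ to $\sum_{i=0}^r x_i^{\sqrt q+1}=0$ for some $0\le r\le n$). *)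

theory Defs
  imports "HOL-Library.Poly_Mapping" "HOL-Computational_Algebra.Squarefree"
begin

type_synonym ('v, 'a) mpoly = "('v \<Rightarrow>\<^sub>0 nat) \<Rightarrow>\<^sub>0 'a"

definition mmonom :: "('v \<Rightarrow>\<^sub>0 nat) \<Rightarrow> 'a::zero \<Rightarrow> ('v, 'a) mpoly" where
  "mmonom m c = Poly_Mapping.single m c"

definition const :: "'a::zero \<Rightarrow> ('v, 'a) mpoly" where
  "const c = mmonom 0 c"

definition var_pow :: "'v \<Rightarrow> nat \<Rightarrow> ('v, 'a::{zero,one}) mpoly" where
  "var_pow i k = mmonom (Poly_Mapping.single i k) 1"

definition var :: "'v \<Rightarrow> ('v, 'a::{zero,one}) mpoly" where
  "var i = var_pow i 1"

definition total_degree :: "('v \<Rightarrow>\<^sub>0 nat) \<Rightarrow> nat" where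
  "total_degree m = (\<Sum>j\<in>Poly_Mapping.keys m. Poly_Mapping.lookup m j)"

definition homogeneous :: "nat \<Rightarrow> ('v, 'a::zero) mpoly \<Rightarrow> bool" where
  "homogeneous d F \<longleftrightarrow> (\<forall>m\<in>Poly_Mapping.keys F. total_degree m = d)"

definition pdiff :: "'v \<Rightarrow> ('v, 'a::comm_ring_1) mpoly \<Rightarrow> ('v, 'a) mpoly" where
  "pdiff i F = (\<Sum>m\<in>Poly_Mapping.keys F. mmonom (m - Poly_Mapping.single i 1) (of_nat (Poly_Mapping.lookup m i) * Poly_Mapping.lookup F m))"

definition F10 :: "('v::finite, 'a::{finite,field}) mpoly \<Rightarrow> ('v, 'a) mpoly" where
  "F10 F = (\<Sum>i\<in>UNIV. var_pow i (card (UNIV :: 'a set)) * pdiff i F)"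

definition frobenius_nonclassical :: "('v::finite, 'a::{finite,field}) mpoly \<Rightarrow> bool" where
  "frobenius_nonclassical F \<longleftrightarrow> F dvd F10 F"

text \<open>Hermitian polynomial xbar H x^t, with conjugation a \<mapsto> a^r where r = sqrt q.\<close>
definition hermitian_poly :: "nat \<Rightarrow> ('v::finite \<Rightarrow> 'v \<Rightarrow> 'a::comm_ring_1) \<Rightarrow> ('v, 'a) mpoly" where
  "hermitian_poly r H = (\<Sum>i\<in>UNIV. \<Sum>j\<in>UNIV. const (H i j) * var_pow i r * var j)"

definition hermitian_matrix :: "nat \<Rightarrow> ('v \<Rightarrow> 'v \<Rightarrow> 'a::comm_ring_1) \<Rightarrow> bool" where
  "hermitian_matrix r H \<longleftrightarrow> (\<forall>i j. H j i ^ r = H i j)"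

definition is_hermitian :: "nat \<Rightarrow> ('v::finite, 'a::field) mpoly \<Rightarrow> bool" where
  "is_hermitian r F \<longleftrightarrow> (\<exists>H a. H \<noteq> (\<lambda>_ _. 0) \<and> hermitian_matrix r H \<and> a \<noteq> 0 \<and>
      F = const a * hermitian_poly r H)"

end

theory Submission
  imports Defs "HOL-Computational_Algebra.Polynomial" "HOL-Algebra.Sylow"
begin

text \<open>
  Write r for the square root of q. As r is a power of the characteristic p, raising to the r-th
  power is additive, so F^r is supported on the exponent vectors r m, with coefficients a_m^r.
  On the other side, as all exponents of F are smaller than q, the coefficient of x_j^q x^m / x_j
  in F_{1,0} is m_j a_m. Since the degree r + 1 of F is 1 modulo p, every monomial x^m of F has
  an exponent m_j that is nonzero modulo p, so x_j^q x^m / x_j is an r-th power; together with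
  the degree this forces x^m = x_i^r x_j. Comparing the coefficients of x_j^q x_i^r gives
  a_ij = c a_ji^r, whence c^(r+1) = 1. Every (r+1)-th root of unity of F_q is an (r-1)-th power,
  say c = mu^(r-1), and then (mu a_ij) is a Hermitian matrix whose Hermitian form is mu F.
\<close>

section \<open>Finite fields\<close>

lemma finite_field_power_card_minus_one:
  fixes x :: "'a::{finite,field}"
  assumes "x \<noteq> 0"
  shows "x ^ (card (UNIV :: 'a set) - 1) = 1"
proof -
  let ?U = "UNIV - {0 :: 'a}"
  have "bij_betw ((*) x) ?U ?U"
    using assms by (intro bij_betwI[where g = "\<lambda>y. y / x"]) auto
  then have "\<Prod>?U = (\<Prod>y\<in>?U. x * y)"
    using prod.reindex_bij_betw[of "(*) x" ?U ?U "\<lambda>y. y"] by simp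
  also have "\<dots> = x ^ card ?U * \<Prod>?U"
    by (simp add: prod.distrib)
  finally have "x ^ card ?U = 1"
    by simp
  then show ?thesis
    by (simp add: card_Diff_subset)
qed

lemma finite_field_power_card:
  fixes x :: "'a::{finite,field}"
  shows "x ^ card (UNIV :: 'a set) = x"
proof (cases "x = 0")
  case False
  have "x ^ card (UNIV :: 'a set) = x * x ^ (card (UNIV :: 'a set) - 1)"
    by (simp add: Suc_pred[OF finite_UNIV_card_ge_0] flip: power_Suc)
  with finite_field_power_card_minus_one[OF False] show ?thesis
    by simp
qed (simp add: finite_UNIV_card_ge_0)

lemma prime_CHAR_finite_field: "prime CHAR('a::{finite,field})"
  by (intro prime_CHAR_semidom finite_imp_CHAR_pos) simp

lemma two_le_card_finite_field: "2 \<le> card (UNIV :: 'a::{finite,field} set)"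
  using card_mono[of UNIV "{0, 1 :: 'a}"] by simp

lemma prime_dvd_card_finite_field:
  fixes l :: nat
  assumes "prime l" and "l dvd card (UNIV :: 'a::{finite,field} set)"
  shows "l = CHAR('a)"
proof -
  define G where "G = \<lparr>carrier = UNIV :: 'a set, monoid.mult = (+), one = 0 :: 'a\<rparr>"
  have G: "group G"
  proof (rule groupI)
    show "\<exists>y\<in>carrier G. y \<otimes>\<^bsub>G\<^esub> x = \<one>\<^bsub>G\<^esub>" for x
      by (intro bexI[of _ "- x"]) (auto simp: G_def)
  qed (auto simp: G_def add_ac)
  obtain m where "order G = l ^ 1 * m"
    using assms(2) by (auto simp: order_def G_def)
  then obtain H where H: "subgroup H G" "card H = l"
    using sylow_thm[OF assms(1) G, of 1 m] by (auto simp: G_def)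
  have "card H > 1"
    using H(2) prime_gt_1_nat[OF assms(1)] by simp
  then have "card (H - {0}) > 0"
    by (simp add: card_Diff_singleton_if)
  then obtain x where x: "x \<in> H" "x \<noteq> 0"
    by (metis DiffE card_gt_0_iff ex_in_conv singletonI)
  have fin: "finite H"
    using \<open>card H > 1\<close> card.infinite by fastforce
  have "h + x \<in> H" if "h \<in> H" for h
    using subgroup.m_closed[OF H(1) that x(1)] by (simp add: G_def)
  then have "(\<lambda>h. h + x) ` H = H"
    by (intro endo_inj_surj fin inj_onI) auto
  then have "(\<Sum>h\<in>H. h) = (\<Sum>h\<in>H. h + x)"
    using sum.reindex[of "\<lambda>h. h + x" H "\<lambda>h. h"] by (simp add: inj_on_def)
  then have "(of_nat l :: 'a) * x = 0"
    by (simp add: sum.distrib H(2))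
  then have "(of_nat l :: 'a) = 0"
    using x(2) by simp
  then have "CHAR('a) dvd l"
    by (simp add: of_nat_eq_0_iff_char_dvd)
  then show ?thesis
    using assms(1) prime_CHAR_finite_field primes_dvd_imp_eq by metis
qed

lemma card_finite_field_eq_CHAR_power:
  "\<exists>k. card (UNIV :: 'a::{finite,field} set) = CHAR('a) ^ k"
proof -
  let ?q = "card (UNIV :: 'a set)" and ?p = "CHAR('a)"
  have "?q \<noteq> 0" and "\<not> is_unit ?p"
    using prime_CHAR_finite_field[where 'a = 'a] by (simp_all add: finite_UNIV_card_ge_0 not_prime_unit)
  then obtain y where y: "?q = ?p ^ multiplicity ?p ?q * y" "\<not> ?p dvd y"
    using multiplicity_decompose' by blast
  have "y = 1"
  proof (rule ccontr)
    assume "y \<noteq> 1"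
    then obtain l where "prime l" "l dvd y"
      using prime_factor_nat by blast
    moreover from this(2) have "l dvd ?q"
      using y(1) by (metis dvd_mult)
    ultimately have "l = ?p"
      using prime_dvd_card_finite_field by blast
    with \<open>l dvd y\<close> y(2) show False
      by simp
  qed
  with y(1) show ?thesis
    by auto
qed

lemma sqrt_card_finite_field_eq_CHAR_power:
  assumes "card (UNIV :: 'a::{finite,field} set) = r ^ 2"
  shows "\<exists>i>0. r = CHAR('a) ^ i"
proof -
  obtain k where "r ^ 2 = CHAR('a) ^ k"
    using assms card_finite_field_eq_CHAR_power by metis
  then have "r dvd CHAR('a) ^ k"
    by (metis dvd_triv_left power2_eq_square)
  then obtain i where i: "r = CHAR('a) ^ i"
    using divides_primepow_nat[OF prime_CHAR_finite_field] by blast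
  have "i \<noteq> 0"
    using two_le_card_finite_field[where 'a = 'a] assms i by (intro notI) simp
  with i show ?thesis
    by blast
qed

lemma two_le_sqrt_card_finite_field:
  assumes "card (UNIV :: 'a::{finite,field} set) = r ^ 2"
  shows "2 \<le> r"
proof -
  obtain e where "e > 0" and r: "r = CHAR('a) ^ e"
    using sqrt_card_finite_field_eq_CHAR_power[OF assms] by blast
  have "2 \<le> CHAR('a)"
    using prime_ge_2_nat[OF prime_CHAR_finite_field] .
  also have "\<dots> \<le> r"
    unfolding r using \<open>e > 0\<close> \<open>2 \<le> CHAR('a)\<close> by (intro self_le_power) auto
  finally show ?thesis .
qed

lemma of_nat_sqrt_card_finite_field:
  assumes "card (UNIV :: 'a::{finite,field} set) = r ^ 2"
  shows "(of_nat r :: 'a) = 0"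
  using sqrt_card_finite_field_eq_CHAR_power[OF assms] by (auto simp: of_nat_power)

lemma card_power_eq_le:
  fixes y :: "'a::field"
  assumes "n > 0"
  shows "card {x. x ^ n = y} \<le> n"
proof -
  define p where "p = Polynomial.monom (1 :: 'a) n - [:y:]"
  have "coeff p n = 1"
    using assms by (simp add: p_def coeff_monom coeff_pCons split: nat.split)
  then have "p \<noteq> 0"
    by auto
  moreover have "degree p \<le> n"
    unfolding p_def by (metis degree_diff_le degree_monom_le degree_pCons_0 le0)
  moreover have "{x. x ^ n = y} = {x. poly p x = 0}"
    by (auto simp: p_def poly_monom)
  ultimately show ?thesis
    using card_poly_roots_bound[of p] by simp
qed

lemma finite_field_power_onto_roots_of_unity:
  fixes c :: "'a::{finite,field}"
  assumes card: "card (UNIV :: 'a set) = Suc (a * b)" and c: "c ^ b = 1"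
  shows "\<exists>\<mu>. \<mu> \<noteq> 0 \<and> \<mu> ^ a = c"
proof -
  let ?U = "UNIV - {0 :: 'a}" and ?S = "{y :: 'a. y ^ b = 1}"
  let ?f = "\<lambda>x :: 'a. x ^ a"
  have "a > 0" "b > 0"
    using two_le_card_finite_field[where 'a = 'a] card by auto
  have "?f ` ?U \<subseteq> ?S"
  proof
    fix y assume "y \<in> ?f ` ?U"
    then obtain x where "x \<noteq> 0" "y = x ^ a"
      by blast
    then have "y ^ b = x ^ (card (UNIV :: 'a set) - 1)"
      using card by (simp add: power_mult)
    with finite_field_power_card_minus_one[OF \<open>x \<noteq> 0\<close>] show "y \<in> ?S"
      by simp
  qed
  have fibre: "card {x \<in> ?U. ?f x = y} \<le> a" for y
  proof -
    have "card {x \<in> ?U. ?f x = y} \<le> card {x. x ^ a = y}"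
      by (rule card_mono) auto
    also have "\<dots> \<le> a"
      using \<open>a > 0\<close> by (rule card_power_eq_le)
    finally show ?thesis .
  qed
  have "(\<Union>y\<in>?f ` ?U. {x \<in> ?U. ?f x = y}) = ?U"
    by blast
  then have "a * b = card (\<Union>y\<in>?f ` ?U. {x \<in> ?U. ?f x = y})"
    using card by (simp add: card_Diff_subset)
  also have "\<dots> \<le> (\<Sum>y\<in>?f ` ?U. card {x \<in> ?U. ?f x = y})"
    by (rule card_UN_le) simp
  also have "\<dots> \<le> a * card (?f ` ?U)"
    using sum_bounded_above[of "?f ` ?U" _ a] fibre by (simp add: mult.commute)
  finally have "b \<le> card (?f ` ?U)"
    using \<open>a > 0\<close> by simp
  then have "card ?S \<le> card (?f ` ?U)"
    using card_power_eq_le[OF \<open>b > 0\<close>, of "1 :: 'a"] by linarith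
  with \<open>?f ` ?U \<subseteq> ?S\<close> have "?f ` ?U = ?S"
    by (intro card_seteq) simp_all
  with c have "c \<in> ?f ` ?U"
    by simp
  then show ?thesis
    by blast
qed

section \<open>Exponent vectors and coefficients\<close>

definition scale_exponent :: "nat \<Rightarrow> ('v \<Rightarrow>\<^sub>0 nat) \<Rightarrow> ('v \<Rightarrow>\<^sub>0 nat)" where
  "scale_exponent k m = Poly_Mapping.map ((*) k) m"

lemma lookup_scale_exponent [simp]:
  "Poly_Mapping.lookup (scale_exponent k m) v = k * Poly_Mapping.lookup m v"
  by (simp add: scale_exponent_def Poly_Mapping.map.rep_eq when_def)

lemma scale_exponent_eq_iff [simp]:
  "k > 0 \<Longrightarrow> scale_exponent k m = scale_exponent k m' \<longleftrightarrow> m = m'"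
  by (metis lookup_scale_exponent mult_left_cancel not_gr0 poly_mapping_eqI)

lemma scale_exponent_0 [simp]: "scale_exponent 0 m = 0"
  by (rule poly_mapping_eqI) simp

lemma scale_exponent_Suc: "scale_exponent (Suc k) m = m + scale_exponent k m"
  by (rule poly_mapping_eqI) (simp add: lookup_add)

lemma scale_exponent_single [simp]:
  "scale_exponent k (Poly_Mapping.single i n) = Poly_Mapping.single i (k * n)"
  by (rule poly_mapping_eqI) (simp add: lookup_single when_def)

lemma single_power:
  "Poly_Mapping.single m (b :: 'a::comm_semiring_1) ^ k = Poly_Mapping.single (scale_exponent k m) (b ^ k)"
  by (induction k) (simp_all add: scale_exponent_Suc mult_single)

lemma eq_scale_exponent_diff_single:
  assumes "scale_exponent r m = Poly_Mapping.single j (r * s) + w"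
  shows "w = scale_exponent r (m - Poly_Mapping.single j s)"
proof (rule poly_mapping_eqI)
  fix k
  show "Poly_Mapping.lookup w k = Poly_Mapping.lookup (scale_exponent r (m - Poly_Mapping.single j s)) k"
    using arg_cong[OF assms, of "\<lambda>m. Poly_Mapping.lookup m k"]
    by (cases "k = j") (simp_all add: lookup_add lookup_minus lookup_single_not_eq diff_mult_distrib2)
qed

lemma total_degree_add: "total_degree (m + n) = total_degree m + total_degree n"
  unfolding total_degree_def by (rule setsum_keys_plus_distrib) simp_all

lemma total_degree_scale_exponent: "total_degree (scale_exponent k m) = k * total_degree m"
proof (cases "k = 0")
  case False
  then have "Poly_Mapping.keys (scale_exponent k m) = Poly_Mapping.keys m"
    by (simp add: in_keys_iff set_eq_iff)
  then show ?thesis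
    by (simp add: total_degree_def sum_distrib_left)
qed (simp add: total_degree_def)

lemma total_degree_single [simp]: "total_degree (Poly_Mapping.single i n) = n"
  by (simp add: total_degree_def)

lemma lookup_le_total_degree: "Poly_Mapping.lookup m k \<le> total_degree m"
  unfolding total_degree_def
  by (cases "k \<in> Poly_Mapping.keys m") (auto intro: member_le_sum simp: in_keys_iff)

lemma total_degree_eq_1D:
  assumes "total_degree m = 1"
  shows "\<exists>i. m = Poly_Mapping.single i 1"
proof -
  obtain i where i: "i \<in> Poly_Mapping.keys m"
    using assms by (fastforce simp: total_degree_def)
  have "total_degree m = Poly_Mapping.lookup m i + (\<Sum>k\<in>Poly_Mapping.keys m - {i}. Poly_Mapping.lookup m k)"
    using i by (simp add: total_degree_def sum.remove)
  moreover have "Poly_Mapping.lookup m i \<ge> 1"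
    using i by (simp add: in_keys_iff)
  ultimately have "Poly_Mapping.lookup m i = 1" "(\<Sum>k\<in>Poly_Mapping.keys m - {i}. Poly_Mapping.lookup m k) = 0"
    using assms by linarith+
  then have "Poly_Mapping.lookup m i = 1" "Poly_Mapping.keys m - {i} = {}"
    by (auto simp: sum_eq_0_iff in_keys_iff)
  then have "m = Poly_Mapping.single i 1"
    by (intro poly_mapping_eqI) (auto simp: lookup_single when_def in_keys_iff)
  then show ?thesis ..
qed

lemma ex_of_nat_lookup_neq_0:
  assumes "(of_nat (total_degree m) :: 'a::semiring_1) \<noteq> 0"
  shows "\<exists>j. (of_nat (Poly_Mapping.lookup m j) :: 'a) \<noteq> 0"
  using assms by (auto simp: total_degree_def intro: sum.neutral)

lemma poly_mapping_sum_single: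
  "F = (\<Sum>m\<in>Poly_Mapping.keys F. Poly_Mapping.single m (Poly_Mapping.lookup F m))"
  by (rule poly_mapping_eqI) (simp add: lookup_sum lookup_single when_def in_keys_iff)

lemma lookup_single_mult_add:
  fixes P :: "'m::cancel_comm_monoid_add \<Rightarrow>\<^sub>0 'a::comm_semiring_1"
  shows "Poly_Mapping.lookup (Poly_Mapping.single d b * P) (d + w) = b * Poly_Mapping.lookup P w"
proof -
  have "Poly_Mapping.lookup (Poly_Mapping.single d b * P) (d + w) =
      (\<Sum>l. (b * (\<Sum>q. Poly_Mapping.lookup P q when d + w = d + q)) when l = d)"
    unfolding lookup_mult by (rule Sum_any.cong) (auto simp: lookup_single when_def)
  also have "(\<Sum>q. Poly_Mapping.lookup P q when d + w = d + q) = (\<Sum>q. Poly_Mapping.lookup P q when q = w)"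
    by (rule Sum_any.cong) (auto simp: when_def)
  finally show ?thesis
    by simp
qed

lemma lookup_single_mult_eq_0:
  fixes P :: "'m::comm_monoid_add \<Rightarrow>\<^sub>0 'a::comm_semiring_1"
  assumes "\<And>w. u \<noteq> d + w"
  shows "Poly_Mapping.lookup (Poly_Mapping.single d b * P) u = 0"
proof -
  have "u \<notin> Poly_Mapping.keys (Poly_Mapping.single d b * P)"
    using keys_mult[of "Poly_Mapping.single d b" P] assms by (auto split: if_splits)
  then show ?thesis
    by (simp add: in_keys_iff)
qed

lemma lookup_const_mult [simp]:
  fixes P :: "('v, 'a::comm_semiring_1) mpoly"
  shows "Poly_Mapping.lookup (const c * P) u = c * Poly_Mapping.lookup P u"
  using lookup_single_mult_add[of 0 c P u] by (simp add: const_def mmonom_def)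

lemma const_mult: "const (a * b) = const a * (const b :: ('v, 'a::comm_semiring_1) mpoly)"
  by (simp add: const_def mmonom_def mult_single)

lemma const_1 [simp]: "const 1 = 1"
  by (simp add: const_def mmonom_def)

lemma CHAR_poly_mapping: "CHAR('m::monoid_add \<Rightarrow>\<^sub>0 'a::semiring_1) = CHAR('a)"
proof (rule CHAR_eqI)
  show "of_nat CHAR('a) = (0 :: 'm \<Rightarrow>\<^sub>0 'a)"
    by (rule poly_mapping_eqI) (simp add: lookup_of_nat when_def)
next
  fix n assume "of_nat n = (0 :: 'm \<Rightarrow>\<^sub>0 'a)"
  then have "Poly_Mapping.lookup (of_nat n :: 'm \<Rightarrow>\<^sub>0 'a) 0 = 0"
    by simp
  then show "CHAR('a) dvd n"
    by (simp add: lookup_of_nat of_nat_eq_0_iff_char_dvd)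
qed

lemma power_CHAR_power_eq_sum_single:
  fixes F :: "('v, 'a::comm_semiring_1) mpoly"
  assumes "prime CHAR('a)" and "r = CHAR('a) ^ i"
  shows "F ^ r = (\<Sum>m\<in>Poly_Mapping.keys F. Poly_Mapping.single (scale_exponent r m) (Poly_Mapping.lookup F m ^ r))"
proof -
  have "F ^ r = (\<Sum>m\<in>Poly_Mapping.keys F. Poly_Mapping.single m (Poly_Mapping.lookup F m)) ^ r"
    by (subst poly_mapping_sum_single) (rule refl)
  also have "\<dots> = (\<Sum>m\<in>Poly_Mapping.keys F. Poly_Mapping.single m (Poly_Mapping.lookup F m) ^ r)"
    using assms by (intro freshmans_dream_sum') (simp_all add: CHAR_poly_mapping)
  finally show ?thesis
    by (simp add: single_power)
qed

lemma lookup_power_CHAR_power_scale_exponent: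
  fixes F :: "('v, 'a::comm_semiring_1) mpoly"
  assumes "prime CHAR('a)" and "r = CHAR('a) ^ i"
  shows "Poly_Mapping.lookup (F ^ r) (scale_exponent r m) = Poly_Mapping.lookup F m ^ r"
proof -
  have "r > 0"
    using assms prime_gt_0_nat by simp
  then show ?thesis
    unfolding power_CHAR_power_eq_sum_single[OF assms]
    by (simp add: lookup_sum lookup_single when_def in_keys_iff zero_power)
qed

lemma lookup_power_CHAR_power_eq_0:
  fixes F :: "('v, 'a::comm_semiring_1) mpoly"
  assumes "prime CHAR('a)" and "r = CHAR('a) ^ i" and "u \<notin> range (scale_exponent r)"
  shows "Poly_Mapping.lookup (F ^ r) u = 0"
  using assms(3) unfolding power_CHAR_power_eq_sum_single[OF assms(1,2)]
  by (auto simp: lookup_sum lookup_single when_def intro!: sum.neutral)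

lemma lookup_pdiff:
  "Poly_Mapping.lookup (pdiff i F) w =
    of_nat (Poly_Mapping.lookup w i + 1) * Poly_Mapping.lookup F (w + Poly_Mapping.single i 1)"
proof -
  let ?c = "\<lambda>m. of_nat (Poly_Mapping.lookup m i) * Poly_Mapping.lookup F m"
  have "Poly_Mapping.lookup (pdiff i F) w = (\<Sum>m\<in>Poly_Mapping.keys F. ?c m when m - Poly_Mapping.single i 1 = w)"
    by (simp add: pdiff_def lookup_sum mmonom_def lookup_single when_def eq_commute)
  also have "\<dots> = (\<Sum>m\<in>Poly_Mapping.keys F. ?c m when m = w + Poly_Mapping.single i 1)"
  proof (rule sum.cong[OF refl])
    fix m
    have "m - Poly_Mapping.single i 1 = w \<longleftrightarrow> m = w + Poly_Mapping.single i 1"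
      if "Poly_Mapping.lookup m i > 0"
      using that by (auto simp: poly_mapping_eq_iff fun_eq_iff lookup_add lookup_minus lookup_single when_def)
    then show "(?c m when m - Poly_Mapping.single i 1 = w) = (?c m when m = w + Poly_Mapping.single i 1)"
      by (cases "Poly_Mapping.lookup m i = 0") (auto simp: when_def)
  qed
  also have "\<dots> = of_nat (Poly_Mapping.lookup w i + 1) * Poly_Mapping.lookup F (w + Poly_Mapping.single i 1)"
    by (simp add: when_def in_keys_iff lookup_add)
  finally show ?thesis .
qed

lemma lookup_F10:
  fixes F :: "('v::finite, 'a::{finite,field}) mpoly"
  assumes small: "\<And>i. i \<noteq> j \<Longrightarrow> Poly_Mapping.lookup w i < card (UNIV :: 'a set)"
  shows "Poly_Mapping.lookup (F10 F) (Poly_Mapping.single j (card (UNIV :: 'a set)) + w) =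
    of_nat (Poly_Mapping.lookup w j + 1) * Poly_Mapping.lookup F (w + Poly_Mapping.single j 1)"
proof -
  let ?q = "card (UNIV :: 'a set)"
  have "Poly_Mapping.lookup (Poly_Mapping.single (Poly_Mapping.single i ?q) 1 * pdiff i F) (Poly_Mapping.single j ?q + w) = 0"
    if "i \<noteq> j" for i
  proof (rule lookup_single_mult_eq_0)
    fix w'
    show "Poly_Mapping.single j ?q + w \<noteq> Poly_Mapping.single i ?q + w'"
    proof
      assume "Poly_Mapping.single j ?q + w = Poly_Mapping.single i ?q + w'"
      then have "Poly_Mapping.lookup (Poly_Mapping.single j ?q + w) i = Poly_Mapping.lookup (Poly_Mapping.single i ?q + w') i"
        by simp
      with small[OF that] that show False
        by (simp add: lookup_add lookup_single when_def)
    qed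
  qed
  then have "Poly_Mapping.lookup (F10 F) (Poly_Mapping.single j ?q + w) =
      Poly_Mapping.lookup (Poly_Mapping.single (Poly_Mapping.single j ?q) 1 * pdiff j F) (Poly_Mapping.single j ?q + w)"
    by (simp add: F10_def var_pow_def mmonom_def sum.remove[of UNIV j] lookup_add lookup_sum)
  then show ?thesis
    by (simp add: lookup_single_mult_add lookup_pdiff)
qed

section \<open>Hermitian polynomials\<close>

lemma hermitian_matrix_rescale:
  fixes A :: "'v \<Rightarrow> 'v \<Rightarrow> 'a::{finite,field}"
  assumes card: "card (UNIV :: 'a set) = r ^ 2"
    and twisted: "\<And>i j. A i j = c * A j i ^ r"
    and nonzero: "A \<noteq> (\<lambda>_ _. 0)"
  shows "\<exists>\<mu>. \<mu> \<noteq> 0 \<and> hermitian_matrix r (\<lambda>i j. \<mu> * A i j)"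
proof -
  have "r \<ge> 2"
    using two_le_sqrt_card_finite_field[OF card] .
  obtain i j where "A i j \<noteq> 0"
    using nonzero by (auto simp: fun_eq_iff)
  have "A i j = c * (c * A i j ^ r) ^ r"
    using twisted[of i j] twisted[of j i] by simp
  also have "\<dots> = c ^ (r + 1) * A i j ^ (r * r)"
    by (simp add: power_mult_distrib power_mult)
  also have "A i j ^ (r * r) = A i j"
    using finite_field_power_card[of "A i j"] card by (simp add: power2_eq_square)
  finally have "c ^ (r + 1) = 1"
    using \<open>A i j \<noteq> 0\<close> by simp
  moreover have "card (UNIV :: 'a set) = Suc ((r - 1) * (r + 1))"
    using card \<open>r \<ge> 2\<close> by (simp add: power2_eq_square algebra_simps diff_mult_distrib)
  ultimately obtain \<mu> where "\<mu> \<noteq> 0" and \<mu>: "\<mu> ^ (r - 1) = c"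
    using finite_field_power_onto_roots_of_unity by blast
  have "\<mu> ^ r = \<mu> * c"
    using \<mu> \<open>r \<ge> 2\<close> by (cases r) simp_all
  then have "hermitian_matrix r (\<lambda>i j. \<mu> * A i j)"
    by (simp add: hermitian_matrix_def power_mult_distrib twisted[symmetric] mult.assoc)
  with \<open>\<mu> \<noteq> 0\<close> show ?thesis
    by blast
qed

abbreviation hermitian_exponent :: "nat \<Rightarrow> 'v \<Rightarrow> 'v \<Rightarrow> ('v \<Rightarrow>\<^sub>0 nat)" where
  "hermitian_exponent r i j \<equiv> Poly_Mapping.single i r + Poly_Mapping.single j 1"

lemma ex_hermitian_exponent_of_scaled:
  assumes "Poly_Mapping.single j (r * r) + w \<in> range (scale_exponent r)"
    and "total_degree (w + Poly_Mapping.single j 1) = r + 1" and "r > 0"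
  shows "\<exists>i. w + Poly_Mapping.single j 1 = hermitian_exponent r i j"
proof -
  obtain n where n: "w = scale_exponent r n"
    using assms(1) eq_scale_exponent_diff_single by (metis rangeE)
  with assms(2,3) have "total_degree n = 1"
    by (simp add: total_degree_add total_degree_scale_exponent)
  then obtain i where "n = Poly_Mapping.single i 1"
    using total_degree_eq_1D by blast
  with n show ?thesis
    by auto
qed

lemma hermitian_exponent_eq_iff:
  assumes "r \<ge> 2"
  shows "hermitian_exponent r i j = hermitian_exponent r k l \<longleftrightarrow> i = k \<and> j = l"
proof
  assume eq: "hermitian_exponent r i j = hermitian_exponent r k l"
  have "i = k"
  proof (rule ccontr)
    assume "i \<noteq> k"
    with arg_cong[OF eq, of "\<lambda>m. Poly_Mapping.lookup m i"] assms show False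
      by (auto simp: lookup_add lookup_single when_def split: if_splits)
  qed
  with arg_cong[OF eq, of "\<lambda>m. Poly_Mapping.lookup m j"] show "i = k \<and> j = l"
    by (auto simp: lookup_add lookup_single when_def split: if_splits)
qed simp

lemma hermitian_poly_eq_sum_single:
  "hermitian_poly r H = (\<Sum>i\<in>UNIV. \<Sum>j\<in>UNIV. Poly_Mapping.single (hermitian_exponent r i j) (H i j))"
  by (simp add: hermitian_poly_def const_def var_pow_def var_def mmonom_def mult_single)

lemma lookup_hermitian_poly:
  assumes "r \<ge> 2"
  shows "Poly_Mapping.lookup (hermitian_poly r H) (hermitian_exponent r k l) = H k l"
proof -
  have "Poly_Mapping.lookup (hermitian_poly r H) (hermitian_exponent r k l) =
      (\<Sum>i\<in>UNIV. \<Sum>j\<in>UNIV. if i = k \<and> j = l then H i j else 0)"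
    by (simp only: hermitian_poly_eq_sum_single lookup_sum lookup_single when_def hermitian_exponent_eq_iff[OF assms])
  also have "\<dots> = (\<Sum>i\<in>UNIV. if i = k then H i l else 0)"
  proof (rule sum.cong[OF refl])
    show "(\<Sum>j\<in>UNIV. if i = k \<and> j = l then H i j else 0) = (if i = k then H i l else 0)" for i
      by (cases "i = k") simp_all
  qed
  also have "\<dots> = H k l"
    by simp
  finally show ?thesis .
qed

lemma lookup_hermitian_poly_eq_0:
  assumes "\<nexists>i j. u = hermitian_exponent r i j"
  shows "Poly_Mapping.lookup (hermitian_poly r H) u = 0"
  unfolding hermitian_poly_eq_sum_single lookup_sum lookup_single when_def
  using assms by (auto intro!: sum.neutral; blast)

lemma eq_hermitian_poly_lookup:
  assumes "r \<ge> 2" and keys: "\<And>m. m \<in> Poly_Mapping.keys F \<Longrightarrow> \<exists>i j. m = hermitian_exponent r i j"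
  shows "F = hermitian_poly r (\<lambda>i j. Poly_Mapping.lookup F (hermitian_exponent r i j))"
proof (rule poly_mapping_eqI)
  fix u
  show "Poly_Mapping.lookup F u =
      Poly_Mapping.lookup (hermitian_poly r (\<lambda>i j. Poly_Mapping.lookup F (hermitian_exponent r i j))) u"
  proof (cases "\<exists>i j. u = hermitian_exponent r i j")
    case True
    then obtain i j where u: "u = hermitian_exponent r i j"
      by blast
    show ?thesis
      unfolding u lookup_hermitian_poly[OF assms(1)] ..
  next
    case False
    then show ?thesis
      using keys lookup_hermitian_poly_eq_0 by (metis in_keys_iff)
  qed
qed

lemma hermitian_poly_mult_const:
  "hermitian_poly r (\<lambda>i j. a * H i j) = const a * hermitian_poly r H"
  by (simp add: hermitian_poly_def sum_distrib_left const_mult mult.assoc)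

lemma hermitian_poly_zero [simp]: "hermitian_poly r (\<lambda>_ _. 0) = 0"
  by (simp add: hermitian_poly_def const_def mmonom_def)

lemma F10_eq_const_mult_power_imp_keys:
  fixes F :: "('v::finite, 'a::{finite,field}) mpoly"
  assumes card: "card (UNIV :: 'a set) = r ^ 2"
    and homog: "homogeneous (r + 1) F"
    and F10_eq: "F10 F = const c * F ^ r"
    and m: "m \<in> Poly_Mapping.keys F"
  shows "\<exists>i j. m = hermitian_exponent r i j"
proof -
  obtain e where r: "r = CHAR('a) ^ e"
    using sqrt_card_finite_field_eq_CHAR_power[OF card] by blast
  have "2 \<le> r" and r0: "(of_nat r :: 'a) = 0"
    using two_le_sqrt_card_finite_field[OF card] of_nat_sqrt_card_finite_field[OF card] by auto
  have q: "card (UNIV :: 'a set) = r * r"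
    using card by (simp add: power2_eq_square)
  have deg: "total_degree m = r + 1"
    using homog m by (simp add: homogeneous_def)
  with r0 have "(of_nat (total_degree m) :: 'a) \<noteq> 0"
    by simp
  then obtain j where j: "(of_nat (Poly_Mapping.lookup m j) :: 'a) \<noteq> 0"
    using ex_of_nat_lookup_neq_0 by blast
  define w where "w = m - Poly_Mapping.single j 1"
  have "Poly_Mapping.lookup m j > 0"
    using j by (metis gr0I of_nat_0)
  then have m_eq: "m = w + Poly_Mapping.single j 1"
    by (intro poly_mapping_eqI) (auto simp: w_def lookup_add lookup_minus lookup_single when_def)
  have "Poly_Mapping.lookup w k < card (UNIV :: 'a set)" if "k \<noteq> j" for k
  proof -
    have "Poly_Mapping.lookup w k \<le> r + 1"
      using lookup_le_total_degree[of m k] deg that by (simp add: m_eq lookup_add lookup_single)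
    also have "r + 1 < r * r"
      using mult_le_mono1[OF \<open>2 \<le> r\<close>, of r] \<open>2 \<le> r\<close> by linarith
    finally show ?thesis
      using q by simp
  qed
  then have "Poly_Mapping.lookup (F10 F) (Poly_Mapping.single j (r * r) + w) =
      of_nat (Poly_Mapping.lookup m j) * Poly_Mapping.lookup F m"
    using lookup_F10[of j w F] by (simp add: q m_eq lookup_add)
  also have "\<dots> \<noteq> 0"
    using j m by (simp add: in_keys_iff)
  finally have "Poly_Mapping.single j (r * r) + w \<in> range (scale_exponent r)"
    using lookup_power_CHAR_power_eq_0[OF prime_CHAR_finite_field r] F10_eq by fastforce
  then show ?thesis
    using ex_hermitian_exponent_of_scaled deg \<open>2 \<le> r\<close> unfolding m_eq by fastforce
qed

lemma F10_eq_const_mult_power_imp_lookup_swap: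
  fixes F :: "('v::finite, 'a::{finite,field}) mpoly"
  assumes card: "card (UNIV :: 'a set) = r ^ 2"
    and F10_eq: "F10 F = const c * F ^ r"
  shows "Poly_Mapping.lookup F (hermitian_exponent r i j) = c * Poly_Mapping.lookup F (hermitian_exponent r j i) ^ r"
proof -
  obtain e where r: "r = CHAR('a) ^ e"
    using sqrt_card_finite_field_eq_CHAR_power[OF card] by blast
  have "2 \<le> r" and r0: "(of_nat r :: 'a) = 0"
    using two_le_sqrt_card_finite_field[OF card] of_nat_sqrt_card_finite_field[OF card] by auto
  have q: "card (UNIV :: 'a set) = r * r"
    using card by (simp add: power2_eq_square)
  have "r < r * r"
    using mult_le_mono1[OF \<open>2 \<le> r\<close>, of r] \<open>2 \<le> r\<close> by linarith
  then have "Poly_Mapping.lookup F (hermitian_exponent r i j) =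
      Poly_Mapping.lookup (F10 F) (Poly_Mapping.single j (r * r) + Poly_Mapping.single i r)"
    using lookup_F10[of j "Poly_Mapping.single i r" F] r0 by (simp add: q lookup_single when_def)
  also have "Poly_Mapping.single j (r * r) + Poly_Mapping.single i r = scale_exponent r (hermitian_exponent r j i)"
    by (rule poly_mapping_eqI) (simp add: lookup_add lookup_single when_def)
  also have "Poly_Mapping.lookup (F10 F) \<dots> = c * Poly_Mapping.lookup F (hermitian_exponent r j i) ^ r"
    by (simp only: F10_eq lookup_const_mult lookup_power_CHAR_power_scale_exponent[OF prime_CHAR_finite_field r])
  finally show ?thesis .
qed

theorem corollary3p16:
  fixes F :: "('v::finite, 'a::{finite,field}) mpoly" and r :: nat and c :: 'a
  assumes q_square: "card (UNIV :: 'a set) = r ^ 2"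
    and char_ne_2: "(2::'a) \<noteq> 0"
    and nonzero: "F \<noteq> 0"
    and homog: "homogeneous (r + 1) F"
    and reduced: "squarefree F"
    and fnc: "frobenius_nonclassical F"
    and c_ne: "c \<noteq> 0"
    and F10_eq: "F10 F = const c * F ^ r"
  shows "is_hermitian r F"
proof -
  define A where "A i j = Poly_Mapping.lookup F (hermitian_exponent r i j)" for i j
  have "F = hermitian_poly r A"
    unfolding A_def using two_le_sqrt_card_finite_field[OF q_square]
    by (rule eq_hermitian_poly_lookup) (rule F10_eq_const_mult_power_imp_keys[OF q_square homog F10_eq])
  with nonzero have "A \<noteq> (\<lambda>_ _. 0)"
    by auto
  moreover have "A i j = c * A j i ^ r" for i j
    unfolding A_def by (rule F10_eq_const_mult_power_imp_lookup_swap[OF q_square F10_eq])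
  ultimately obtain \<mu> where "\<mu> \<noteq> 0" and "hermitian_matrix r (\<lambda>i j. \<mu> * A i j)"
    using hermitian_matrix_rescale[OF q_square] by blast
  moreover have "F = const (inverse \<mu>) * hermitian_poly r (\<lambda>i j. \<mu> * A i j)"
    using \<open>\<mu> \<noteq> 0\<close> \<open>F = hermitian_poly r A\<close>
    by (simp add: hermitian_poly_mult_const flip: mult.assoc const_mult)
  moreover have "(\<lambda>i j. \<mu> * A i j) \<noteq> (\<lambda>_ _. 0)"
    using \<open>\<mu> \<noteq> 0\<close> \<open>A \<noteq> (\<lambda>_ _. 0)\<close> by (auto simp: fun_eq_iff)
  ultimately show ?thesis
    unfolding is_hermitian_def by (metis inverse_nonzero_iff_nonzero)
qed

end
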